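(* Let $s,n,k$ be positive integers, $\Gamma=\mathbb{Z}_{sn}\mathbin{\mathrm{wr}}\mathbb{Z}^k$, $G=\mathbb{Z}_n\mathbin{\mathrm{wr}}\mathbb{Z}^k$, with torsion subgroups $\Sigma$ and $\Omega$ respectively, and let $\Pi\colon\Gamma\to G$ and $\pi\colon\Sigma\to\Omega$ be the coefficient-reduction maps (defined in the context). Let $\varphi$ be an automorphism of $\Gamma$. Then there exists an automorphism $\psi$ of $G$ such that $\Pi\circ\varphi=\psi\circ\Pi$, $\pi\circ\varphi'=\psi'\circ\pi$ and $\overline{\varphi}=\overline{\psi}$. Moreover, $R(\varphi)\ge R(\psi)$.
   Context: For a positive integer $m$, $\mathbb{Z}_m\mathbin{\mathrm{wr}}\mathbb{Z}^k=\bigoplus_{x\in\mathbb{Z}^k}(\mathbb{Z}_m)_x\rtimes_\alpha\mathbb{Z}^k$ is the restricted wreath product, where $\alpha(z)$ maps $(\mathbb{Z}_m)_x$ onto $(\mathbb{Z}_m)_{z+x}$; its torsion subgroup is $\bigoplus_x(\mathbb{Z}_m)_x$, which is characteristic. For an automorphism $\varphi$, $\varphi'$ denotes its restriction to the torsion subgroup and $\overline{\varphi}$ the induced automorphism of the quotient $\mathbb{Z}^k$. With $\Delta_x,\delta_x$ the generators of $(\mathbb{Z}_{sn})_x$, $(\mathbb{Z}_n)_x$: $\pi(\sum_i k_i\Delta_{x_i})=\sum_i (k_i\bmod n)\delta_{x_i}$ and $\Pi(\sigma,z)=(\pi(\sigma),z)$. Two elements $g_1,g_2$ are $\varphi$-twisted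 conjugate if $g_1=hg_2\varphi(h^{-1})$ for some $h$; $R(\varphi)$ is the number of such classes (Reidemeister number). *)

theory Defs
  imports "HOL-Algebra.Group" "HOL-Library.Extended_Nat"
begin

text \<open>The group Z^k, realised as integer vectors indexed by nat that vanish
  at indices >= k.\<close>
definition zk :: "nat \<Rightarrow> (nat \<Rightarrow> int) set" where
  "zk k = {z. \<forall>i\<ge>k. z i = 0}"

text \<open>Torsion part: finitely supported functions Z^k -> Z_m, with Z_m
  represented by the residues {0..<m}.\<close>
definition sigma :: "nat \<Rightarrow> nat \<Rightarrow> ((nat \<Rightarrow> int) \<Rightarrow> int) set" where
  "sigma m k = {\<sigma>. (\<forall>x. \<sigma> x \<in> {0..<int m}) \<and> finite {x. \<sigma> x \<noteq> 0}
                   \<and> {x. \<sigma> x \<noteq> 0} \<subseteq> zk k}"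

text \<open>Shift action alpha(z): sends the generator at x to the generator at z+x.\<close>
definition shift :: "nat \<Rightarrow> (nat \<Rightarrow> int) \<Rightarrow> ((nat \<Rightarrow> int) \<Rightarrow> int) \<Rightarrow> ((nat \<Rightarrow> int) \<Rightarrow> int)" where
  "shift m z \<sigma> = (\<lambda>x. \<sigma> (\<lambda>i. x i - z i) mod int m)"

definition wr :: "nat \<Rightarrow> nat \<Rightarrow> (((nat \<Rightarrow> int) \<Rightarrow> int) \<times> (nat \<Rightarrow> int)) monoid" where
  "wr m k = \<lparr> carrier = sigma m k \<times> zk k,
      mult = (\<lambda>(\<sigma>1, z1) (\<sigma>2, z2).
                 ((\<lambda>x. (\<sigma>1 x + shift m z1 \<sigma>2 x) mod int m), (\<lambda>i. z1 i + z2 i))),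
      one = ((\<lambda>x. 0), (\<lambda>i. 0)) \<rparr>"

text \<open>Coefficient reduction pi : Sigma -> Omega and Pi = pi x id.\<close>
definition red :: "nat \<Rightarrow> ((nat \<Rightarrow> int) \<Rightarrow> int) \<Rightarrow> ((nat \<Rightarrow> int) \<Rightarrow> int)" where
  "red n \<sigma> = (\<lambda>x. \<sigma> x mod int n)"

definition Red :: "nat \<Rightarrow> ((nat \<Rightarrow> int) \<Rightarrow> int) \<times> (nat \<Rightarrow> int) \<Rightarrow> ((nat \<Rightarrow> int) \<Rightarrow> int) \<times> (nat \<Rightarrow> int)" where
  "Red n g = (red n (fst g), snd g)"

text \<open>phi' : restriction of phi to the torsion subgroup {(sigma,0)}.\<close>
definition tors :: "(((nat \<Rightarrow> int) \<Rightarrow> int) \<times> (nat \<Rightarrow> int) \<Rightarrow> ((nat \<Rightarrow> int) \<Rightarrow> int) \<times> (nat \<Rightarrow> int))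
                    \<Rightarrow> ((nat \<Rightarrow> int) \<Rightarrow> int) \<Rightarrow> ((nat \<Rightarrow> int) \<Rightarrow> int)" where
  "tors \<phi> \<sigma> = fst (\<phi> (\<sigma>, (\<lambda>i. 0)))"

text \<open>phi-bar : induced automorphism of the quotient Z^k (quotient map = snd).\<close>
definition bar :: "(((nat \<Rightarrow> int) \<Rightarrow> int) \<times> (nat \<Rightarrow> int) \<Rightarrow> ((nat \<Rightarrow> int) \<Rightarrow> int) \<times> (nat \<Rightarrow> int))
                    \<Rightarrow> (nat \<Rightarrow> int) \<Rightarrow> (nat \<Rightarrow> int)" where
  "bar \<phi> z = snd (\<phi> ((\<lambda>x. 0), z))"

definition twisted_conj :: "('a, 'b) monoid_scheme \<Rightarrow> ('a \<Rightarrow> 'a) \<Rightarrow> ('a \<times> 'a) set" where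
  "twisted_conj G \<phi> = {(g1, g2). g1 \<in> carrier G \<and> g2 \<in> carrier G \<and>
      (\<exists>h\<in>carrier G. g1 = h \<otimes>\<^bsub>G\<^esub> g2 \<otimes>\<^bsub>G\<^esub> inv\<^bsub>G\<^esub> (\<phi> h))}"

definition reidemeister :: "('a, 'b) monoid_scheme \<Rightarrow> ('a \<Rightarrow> 'a) \<Rightarrow> enat" where
  "reidemeister G \<phi> = (let C = carrier G // twisted_conj G \<phi> in
      if finite C then enat (card C) else \<infinity>)"

end

(*
  The kernel of the coefficient reduction Pi consists of the torsion elements whose
  coefficients are all divisible by n, i.e. of the n-th powers of torsion elements.
  Every endomorphism of Gamma maps torsion to torsion (an element of finite order
  has trivial image in the torsion-free quotient Z^k), so this kernel is fully
  invariant.  Hence phi descends along the surjection Pi to an automorphism psi of G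
  with Pi o phi = psi o Pi, and the statements about phi' and phi-bar are the two
  components of this identity.  Finally Pi maps each phi-twisted class into a
  psi-twisted class and is onto, so R(psi) <= R(phi).
*)
theory Submission
  imports Defs "HOL-Algebra.Coset"
begin

section \<open>Twisted conjugacy\<close>

lemma twisted_conj_equiv:
  fixes G (structure)
  assumes "group G" and "\<phi> \<in> hom G G"
  shows "equiv (carrier G) (twisted_conj G \<phi>)"
proof -
  interpret group G by fact
  interpret \<phi>: group_hom G G \<phi>
    using assms by (simp add: group_hom_def group_hom_axioms_def)
  show ?thesis
  proof (rule equivI)
    show "refl_on (carrier G) (twisted_conj G \<phi>)"
      by (rule refl_onI) (auto simp: twisted_conj_def intro!: bexI[of _ \<one>])
  next
    show "sym (twisted_conj G \<phi>)"
    proof (rule symI)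
      fix a b assume "(a, b) \<in> twisted_conj G \<phi>"
      then obtain c where a: "a \<in> carrier G" and b: "b \<in> carrier G" and c: "c \<in> carrier G"
        and a_eq: "a = c \<otimes> b \<otimes> inv (\<phi> c)"
        by (auto simp: twisted_conj_def)
      have "inv c \<otimes> a \<otimes> inv (\<phi> (inv c)) = inv c \<otimes> (c \<otimes> b \<otimes> inv (\<phi> c)) \<otimes> \<phi> c"
        using c by (simp add: a_eq)
      also have "\<dots> = b"
        using b c by (simp add: m_assoc flip: m_assoc[of "inv c" c])
      finally show "(b, a) \<in> twisted_conj G \<phi>"
        using a b c by (auto simp: twisted_conj_def intro!: bexI[of _ "inv c"])
    qed
  next
    show "trans (twisted_conj G \<phi>)"
    proof (rule transI)
      fix a b d assume "(a, b) \<in> twisted_conj G \<phi>" "(b, d) \<in> twisted_conj G \<phi>"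
      then obtain c c' where a: "a \<in> carrier G" and c: "c \<in> carrier G" and d: "d \<in> carrier G"
        and c': "c' \<in> carrier G" and "a = c \<otimes> b \<otimes> inv (\<phi> c)" and "b = c' \<otimes> d \<otimes> inv (\<phi> c')"
        by (auto simp: twisted_conj_def)
      then have "a = (c \<otimes> c') \<otimes> d \<otimes> inv (\<phi> (c \<otimes> c'))"
        by (simp add: m_assoc inv_mult_group)
      then show "(a, d) \<in> twisted_conj G \<phi>"
        using a c c' d by (auto simp: twisted_conj_def intro!: bexI[of _ "c \<otimes> c'"])
    qed
  qed (auto simp: twisted_conj_def)
qed

lemma twisted_conj_image:
  assumes "group_hom G H f" and "\<phi> \<in> hom G G"
    and commute: "\<And>g. g \<in> carrier G \<Longrightarrow> f (\<phi> g) = \<psi> (f g)"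
    and "(g1, g2) \<in> twisted_conj G \<phi>"
  shows "(f g1, f g2) \<in> twisted_conj H \<psi>"
proof -
  interpret group_hom G H f by fact
  obtain c where "g1 \<in> carrier G" "g2 \<in> carrier G" "c \<in> carrier G"
    and "g1 = c \<otimes>\<^bsub>G\<^esub> g2 \<otimes>\<^bsub>G\<^esub> inv\<^bsub>G\<^esub> (\<phi> c)"
    using assms(4) by (auto simp: twisted_conj_def)
  moreover from this have "\<psi> (f c) = f (\<phi> c)" "\<phi> c \<in> carrier G"
    using assms(2) by (simp_all add: commute hom_in_carrier)
  ultimately show ?thesis
    by (auto simp: twisted_conj_def intro!: bexI[of _ "f c"])
qed

lemma reidemeister_le_of_surjective_hom:
  assumes "group_hom G H f" and surj: "f ` carrier G = carrier H"
    and "\<phi> \<in> hom G G" and "\<psi> \<in> hom H H"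
    and commute: "\<And>g. g \<in> carrier G \<Longrightarrow> f (\<phi> g) = \<psi> (f g)"
  shows "reidemeister H \<psi> \<le> reidemeister G \<phi>"
proof -
  interpret group_hom G H f by fact
  define rG where "rG = twisted_conj G \<phi>"
  define rH where "rH = twisted_conj H \<psi>"
  have "equiv (carrier G) rG" "equiv (carrier H) rH"
    unfolding rG_def rH_def using assms(3,4) by (simp_all add: twisted_conj_equiv)
  have class_image: "rH `` {f g} = rH `` (f ` (rG `` {g}))" if "g \<in> carrier G" for g
  proof
    have "(g, g) \<in> rG"
      using \<open>equiv (carrier G) rG\<close> that by (simp add: equiv_def refl_on_def)
    then show "rH `` {f g} \<subseteq> rH `` (f ` (rG `` {g}))" by blast
    have "(f g, f g') \<in> rH" if "(g, g') \<in> rG" for g'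
      unfolding rH_def using twisted_conj_image[OF assms(1,3) commute] that by (simp add: rG_def)
    then show "rH `` (f ` (rG `` {g})) \<subseteq> rH `` {f g}"
      using \<open>equiv (carrier H) rH\<close> by (auto elim: equivE transE)
  qed
  have classes: "carrier H // rH \<subseteq> (\<lambda>C. rH `` (f ` C)) ` (carrier G // rG)"
  proof
    fix C assume "C \<in> carrier H // rH"
    then obtain y where "y \<in> carrier H" "C = rH `` {y}"
      by (auto elim: quotientE)
    then obtain g where "g \<in> carrier G" "C = rH `` {f g}"
      using surj by (metis imageE)
    then show "C \<in> (\<lambda>C. rH `` (f ` C)) ` (carrier G // rG)"
      by (auto simp: class_image intro: quotientI)
  qed
  show ?thesis
  proof (cases "finite (carrier G // rG)")
    case True
    then have "finite (carrier H // rH)" "card (carrier H // rH) \<le> card (carrier G // rG)"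
      using classes by (simp_all add: finite_surj surj_card_le)
    then show ?thesis
      using True by (simp add: reidemeister_def rG_def rH_def)
  qed (simp add: reidemeister_def rG_def)
qed

section \<open>Automorphisms descending to a quotient\<close>

lemma (in group_hom) eq_iff_inv_mult_in_kernel:
  assumes "x \<in> carrier G" and "y \<in> carrier G"
  shows "h x = h y \<longleftrightarrow> inv y \<otimes> x \<in> kernel G H h"
  using assms by (simp add: kernel_def) (metis H.inv_solve_left H.one_closed H.r_one hom_closed)

lemma (in group_hom) iso_preserving_kernel_eq_iff:
  assumes \<phi>: "\<phi> \<in> iso G G" and K: "\<phi> ` kernel G H h = kernel G H h"
    and x: "x \<in> carrier G" and y: "y \<in> carrier G"
  shows "h (\<phi> x) = h (\<phi> y) \<longleftrightarrow> h x = h y"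
proof -
  interpret \<phi>: group_hom G G \<phi>
    using \<phi> by (simp add: group_hom_def group_hom_axioms_def iso_imp_homomorphism G.group_axioms)
  have inj: "inj_on \<phi> (carrier G)"
    using \<phi> by (simp add: Group.iso_iff)
  have kernel_iff: "\<phi> z \<in> kernel G H h \<longleftrightarrow> z \<in> kernel G H h" if "z \<in> carrier G" for z
  proof
    assume "\<phi> z \<in> kernel G H h"
    then obtain t where t: "t \<in> kernel G H h" and "\<phi> t = \<phi> z"
      using K by (metis imageE)
    moreover have "t \<in> carrier G"
      using t by (simp add: kernel_def)
    ultimately have "t = z"
      using inj that by (simp add: inj_on_def)
    with t show "z \<in> kernel G H h"
      by simp
  qed (use K in blast)
  have "h (\<phi> x) = h (\<phi> y) \<longleftrightarrow> inv (\<phi> y) \<otimes> \<phi> x \<in> kernel G H h"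
    using x y by (simp add: eq_iff_inv_mult_in_kernel)
  also have "inv (\<phi> y) \<otimes> \<phi> x = \<phi> (inv y \<otimes> x)"
    using x y by simp
  also have "\<phi> (inv y \<otimes> x) \<in> kernel G H h \<longleftrightarrow> inv y \<otimes> x \<in> kernel G H h"
    using x y by (intro kernel_iff) simp
  also have "\<dots> \<longleftrightarrow> h x = h y"
    using x y by (simp add: eq_iff_inv_mult_in_kernel)
  finally show ?thesis .
qed

lemma (in group_hom) induced_iso:
  assumes surj: "h ` carrier G = carrier H"
    and \<phi>: "\<phi> \<in> iso G G" and K: "\<phi> ` kernel G H h = kernel G H h"
  obtains \<psi> where "\<psi> \<in> iso H H" and "\<And>g. g \<in> carrier G \<Longrightarrow> h (\<phi> g) = \<psi> (h g)"
proof
  interpret \<phi>: group_hom G G \<phi>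
    using \<phi> by (simp add: group_hom_def group_hom_axioms_def iso_imp_homomorphism G.group_axioms)
  define \<psi> where "\<psi> y = h (\<phi> (inv_into (carrier G) h y))" for y
  have preimage: "\<exists>a \<in> carrier G. y = h a" if "y \<in> carrier H" for y
    using surj that by blast
  show commute: "h (\<phi> g) = \<psi> (h g)" if "g \<in> carrier G" for g
  proof -
    have "inv_into (carrier G) h (h g) \<in> carrier G" "h (inv_into (carrier G) h (h g)) = h g"
      using that by (simp_all add: inv_into_into f_inv_into_f)
    then show ?thesis
      using that by (simp add: \<psi>_def iso_preserving_kernel_eq_iff[OF \<phi> K])
  qed
  have "\<psi> \<in> hom H H"
  proof (rule homI)
    fix x y assume "x \<in> carrier H" "y \<in> carrier H"
    then obtain a b where a: "a \<in> carrier G" "x = h a" and b: "b \<in> carrier G" "y = h b"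
      using preimage by meson
    then have "\<psi> (x \<otimes>\<^bsub>H\<^esub> y) = \<psi> (h (a \<otimes> b))"
      by simp
    also have "\<dots> = h (\<phi> a) \<otimes>\<^bsub>H\<^esub> h (\<phi> b)"
      using a b commute[of "a \<otimes> b"] by simp
    finally show "\<psi> (x \<otimes>\<^bsub>H\<^esub> y) = \<psi> x \<otimes>\<^bsub>H\<^esub> \<psi> y"
      using a b by (simp add: commute)
  next
    fix x assume "x \<in> carrier H"
    then show "\<psi> x \<in> carrier H"
      using preimage by (metis commute \<phi>.hom_closed hom_closed)
  qed
  moreover have "\<psi> ` carrier H = carrier H"
  proof -
    have "\<phi> ` carrier G = carrier G"
      using \<phi> by (simp add: Group.iso_iff)
    then have "carrier H = (\<lambda>g. h (\<phi> g)) ` carrier G"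
      using surj by (simp add: image_image flip: image_image[of h \<phi>])
    also have "\<dots> = \<psi> ` h ` carrier G"
      by (simp add: image_image commute cong: image_cong)
    finally show ?thesis
      using surj by simp
  qed
  moreover have "inj_on \<psi> (carrier H)"
  proof (rule inj_onI)
    fix x y assume "x \<in> carrier H" "y \<in> carrier H" "\<psi> x = \<psi> y"
    then show "x = y"
      using preimage iso_preserving_kernel_eq_iff[OF \<phi> K] by (metis commute)
  qed
  ultimately show "\<psi> \<in> iso H H"
    by (simp add: Group.iso_iff)
qed

definition fully_invariant :: "('a, 'b) monoid_scheme \<Rightarrow> 'a set \<Rightarrow> bool" where
  "fully_invariant G K \<longleftrightarrow> (\<forall>\<chi> \<in> hom G G. \<chi> ` K \<subseteq> K)"

lemma (in group) fully_invariant_iso_image: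
  assumes "fully_invariant G K" and "K \<subseteq> carrier G" and "\<phi> \<in> iso G G"
  shows "\<phi> ` K = K"
proof
  show "\<phi> ` K \<subseteq> K"
    using assms by (simp add: fully_invariant_def iso_imp_homomorphism)
  have "inv_into (carrier G) \<phi> \<in> hom G G"
    using iso_set_sym[OF assms(3)] by (simp add: iso_imp_homomorphism)
  then have "inv_into (carrier G) \<phi> ` K \<subseteq> K"
    using assms(1) by (simp add: fully_invariant_def)
  moreover have "\<phi> (inv_into (carrier G) \<phi> x) = x" if "x \<in> K" for x
    using assms(2,3) that by (auto simp: Group.iso_iff f_inv_into_f)
  then have "K = \<phi> ` inv_into (carrier G) \<phi> ` K"
    by (simp add: image_image)
  ultimately show "K \<subseteq> \<phi> ` K"
    by blast
qed

section \<open>The wreath products\<close>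

lemma zk_add: "a \<in> zk k \<Longrightarrow> b \<in> zk k \<Longrightarrow> (\<lambda>i. a i + b i) \<in> zk k"
  and zk_uminus: "a \<in> zk k \<Longrightarrow> (\<lambda>i. - a i) \<in> zk k"
  and zk_zero: "(\<lambda>i. 0) \<in> zk k"
  by (simp_all add: zk_def)

lemma sigma_mod: "a \<in> sigma m k \<Longrightarrow> a x mod int m = a x"
  by (auto simp: sigma_def)

lemma sigma_mono:
  assumes "n \<le> m"
  shows "sigma n k \<subseteq> sigma m k"
proof -
  have "int n \<le> int m"
    using assms by simp
  then show ?thesis
    unfolding sigma_def by fastforce
qed

lemma sigma_add:
  assumes "m > 0" and "a \<in> sigma m k" and "b \<in> sigma m k"
  shows "(\<lambda>x. (a x + b x) mod int m) \<in> sigma m k"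
proof -
  have "{x. (a x + b x) mod int m \<noteq> 0} \<subseteq> {x. a x \<noteq> 0} \<union> {x. b x \<noteq> 0}"
    by auto
  moreover have "{x. a x \<noteq> 0} \<union> {x. b x \<noteq> 0} \<subseteq> zk k"
    using assms(2,3) by (simp add: sigma_def)
  ultimately show ?thesis
    using assms unfolding sigma_def by (auto intro: finite_subset)
qed

lemma sigma_translate:
  assumes "m > 0" and "a \<in> sigma m k" and "z \<in> zk k"
  shows "(\<lambda>x. c * a (\<lambda>i. x i + z i) mod int m) \<in> sigma m k"
proof -
  have supp: "{x. c * a (\<lambda>i. x i + z i) mod int m \<noteq> 0} \<subseteq> (\<lambda>y i. y i - z i) ` {y. a y \<noteq> 0}"
  proof
    fix x assume "x \<in> {x. c * a (\<lambda>i. x i + z i) mod int m \<noteq> 0}"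
    then have "a (\<lambda>i. x i + z i) \<noteq> 0" by auto
    then show "x \<in> (\<lambda>y i. y i - z i) ` {y. a y \<noteq> 0}"
      by (intro image_eqI[of _ _ "\<lambda>i. x i + z i"]) auto
  qed
  have "(\<lambda>y i. y i - z i) ` {y. a y \<noteq> 0} \<subseteq> zk k"
    using assms(2,3) by (auto simp: sigma_def zk_def)
  with supp assms(1,2) show ?thesis
    unfolding sigma_def by (auto intro: finite_subset)
qed

lemma sigma_shift:
  assumes "m > 0" and "a \<in> sigma m k" and "z \<in> zk k"
  shows "shift m z a \<in> sigma m k"
  using sigma_translate[OF assms(1,2) zk_uminus[OF assms(3)], of 1]
  by (simp add: shift_def)

lemma wr_carrier: "carrier (wr m k) = sigma m k \<times> zk k"
  and wr_one: "\<one>\<^bsub>wr m k\<^esub> = ((\<lambda>x. 0), (\<lambda>i. 0))"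
  and wr_mult: "(a, z) \<otimes>\<^bsub>wr m k\<^esub> (b, w) = ((\<lambda>x. (a x + shift m z b x) mod int m), (\<lambda>i. z i + w i))"
  by (simp_all add: wr_def)

lemma wr_group:
  assumes "m > 0"
  shows "group (wr m k)"
proof (rule groupI)
  fix x y assume "x \<in> carrier (wr m k)" "y \<in> carrier (wr m k)"
  then show "x \<otimes>\<^bsub>wr m k\<^esub> y \<in> carrier (wr m k)"
    using assms by (cases x, cases y) (auto simp: wr_mult wr_carrier zk_add sigma_add sigma_shift)
next
  show "\<one>\<^bsub>wr m k\<^esub> \<in> carrier (wr m k)"
    using assms by (auto simp: wr_one wr_carrier sigma_def zk_def)
next
  fix x y z
  have "(\<lambda>i. v i - (z1 i + z2 i)) = (\<lambda>i. v i - z1 i - z2 i)" for v z1 z2 :: "nat \<Rightarrow> int"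
    by auto
  then show "x \<otimes>\<^bsub>wr m k\<^esub> y \<otimes>\<^bsub>wr m k\<^esub> z = x \<otimes>\<^bsub>wr m k\<^esub> (y \<otimes>\<^bsub>wr m k\<^esub> z)"
    by (cases x, cases y, cases z) (simp add: wr_mult shift_def mod_simps add.assoc)
next
  fix x assume "x \<in> carrier (wr m k)"
  then show "\<one>\<^bsub>wr m k\<^esub> \<otimes>\<^bsub>wr m k\<^esub> x = x"
    by (cases x) (auto simp: wr_one wr_mult wr_carrier shift_def sigma_mod)
next
  fix x assume "x \<in> carrier (wr m k)"
  then obtain a z where x: "x = (a, z)" "a \<in> sigma m k" "z \<in> zk k"
    by (auto simp: wr_carrier)
  define y where "y = ((\<lambda>x. - 1 * a (\<lambda>i. x i + z i) mod int m), (\<lambda>i. - z i))"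
  have "(\<lambda>i. v i - - z i) = (\<lambda>i. v i + z i)" for v :: "nat \<Rightarrow> int"
    by auto
  then have "y \<otimes>\<^bsub>wr m k\<^esub> x = \<one>\<^bsub>wr m k\<^esub>"
    by (simp add: x y_def wr_mult wr_one shift_def mod_simps)
  moreover have "y \<in> carrier (wr m k)"
    using x sigma_translate[OF assms x(2,3), of "- 1"] by (simp add: y_def wr_carrier zk_uminus)
  ultimately show "\<exists>y\<in>carrier (wr m k). y \<otimes>\<^bsub>wr m k\<^esub> x = \<one>\<^bsub>wr m k\<^esub>"
    by blast
qed

lemma wr_pow_snd: "snd (g [^]\<^bsub>wr m k\<^esub> (j::nat)) = (\<lambda>i. int j * snd g i)"
proof (induction j)
  case (Suc j)
  then show ?case
    by (cases g, cases "g [^]\<^bsub>wr m k\<^esub> j") (simp add: wr_mult algebra_simps)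
qed (simp add: wr_one)

lemma wr_pow_torsion:
  "(a, (\<lambda>i. 0)) [^]\<^bsub>wr m k\<^esub> (j::nat) = ((\<lambda>x. int j * a x mod int m), (\<lambda>i. 0))"
  by (induction j) (simp_all add: wr_one wr_mult shift_def mod_simps algebra_simps)

lemma wr_endomorphism_preserves_torsion:
  assumes "m > 0" and \<chi>: "\<chi> \<in> hom (wr m k) (wr m k)" and "a \<in> sigma m k"
  shows "snd (\<chi> (a, (\<lambda>i. 0))) = (\<lambda>i. 0)"
proof -
  have group: "group (wr m k)"
    using assms(1) by (rule wr_group)
  have a: "(a, (\<lambda>i. 0)) \<in> carrier (wr m k)"
    using assms(3) by (simp add: wr_carrier zk_zero)
  have "\<chi> (a, (\<lambda>i. 0)) [^]\<^bsub>wr m k\<^esub> m = \<chi> ((a, (\<lambda>i. 0)) [^]\<^bsub>wr m k\<^esub> m)"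
    using hom_nat_pow[OF \<chi> a group group] by simp
  also have "\<dots> = \<one>\<^bsub>wr m k\<^esub>"
    using hom_one[OF \<chi> group group] by (simp add: wr_pow_torsion wr_one)
  finally have "(\<lambda>i. int m * snd (\<chi> (a, (\<lambda>i. 0))) i) = (\<lambda>i. 0)"
    by (metis wr_pow_snd wr_one snd_conv)
  then show ?thesis
    using assms(1) by (simp add: fun_eq_iff)
qed

section \<open>Reduction of coefficients\<close>

lemma Red_mult: "Red n (g \<otimes>\<^bsub>wr (s * n) k\<^esub> g') = Red n g \<otimes>\<^bsub>wr n k\<^esub> Red n g'"
  by (cases g, cases g') (simp add: wr_mult Red_def red_def shift_def mod_mod_cancel mod_simps)

lemma red_sigma: "n > 0 \<Longrightarrow> a \<in> sigma m k \<Longrightarrow> red n a \<in> sigma n k"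
  unfolding sigma_def red_def by (auto intro: finite_subset[of _ "{x. a x \<noteq> 0}"])

lemma Red_group_hom:
  assumes "s > 0" and "n > 0"
  shows "group_hom (wr (s * n) k) (wr n k) (Red n)"
proof -
  have "Red n \<in> hom (wr (s * n) k) (wr n k)"
  proof (rule homI)
    fix g assume "g \<in> carrier (wr (s * n) k)"
    then obtain a z where "g = (a, z)" "a \<in> sigma (s * n) k" "z \<in> zk k"
      by (auto simp: wr_carrier)
    then show "Red n g \<in> carrier (wr n k)"
      using red_sigma[OF assms(2)] by (simp add: wr_carrier Red_def)
  qed (rule Red_mult)
  then show ?thesis
    using assms by (simp add: group_hom_def group_hom_axioms_def wr_group)
qed

lemma Red_surj:
  assumes "s > 0" and "n > 0"
  shows "Red n ` carrier (wr (s * n) k) = carrier (wr n k)"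
proof
  show "Red n ` carrier (wr (s * n) k) \<subseteq> carrier (wr n k)"
    using group_hom.hom_closed[OF Red_group_hom[OF assms]] by blast
  show "carrier (wr n k) \<subseteq> Red n ` carrier (wr (s * n) k)"
  proof
    fix g assume g: "g \<in> carrier (wr n k)"
    then have "g = Red n g"
      by (auto simp: wr_carrier Red_def red_def sigma_mod)
    moreover have "g \<in> carrier (wr (s * n) k)"
      using g sigma_mono[of n "s * n" k] assms(1) by (auto simp: wr_carrier)
    ultimately show "g \<in> Red n ` carrier (wr (s * n) k)"
      by (rule image_eqI)
  qed
qed

lemma Red_nth_power_torsion: "Red n ((a, (\<lambda>i. 0)) [^]\<^bsub>wr (s * n) k\<^esub> n) = \<one>\<^bsub>wr n k\<^esub>"
  by (simp add: wr_pow_torsion wr_one Red_def red_def mod_mod_cancel del: of_nat_mult)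

lemma kernel_Red_nth_powerE:
  assumes "n > 0" and "t \<in> kernel (wr (s * n) k) (wr n k) (Red n)"
  obtains a where "a \<in> sigma (s * n) k" and "t = (a, (\<lambda>i. 0)) [^]\<^bsub>wr (s * n) k\<^esub> n"
proof -
  obtain b where t: "t = (b, (\<lambda>i. 0))" and b: "b \<in> sigma (s * n) k"
    and dvd: "\<And>x. int n dvd b x"
    using assms(2) by (cases t) (auto simp: kernel_def wr_carrier wr_one Red_def red_def fun_eq_iff)
  define a where "a x = b x div int n" for x
  have "a x \<in> {0..<int (s * n)}" for x
  proof -
    have "0 \<le> b x" "b x < int (s * n)"
      using b by (simp_all add: sigma_def)
    moreover have "b x div int n \<le> b x"
      using \<open>0 \<le> b x\<close> by (cases "b x = 0") (simp_all add: int_div_le_self)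
    ultimately show ?thesis
      using assms(1) by (simp add: a_def pos_imp_zdiv_nonneg_iff del: of_nat_mult)
  qed
  moreover have "{x. a x \<noteq> 0} \<subseteq> {x. b x \<noteq> 0}"
    by (auto simp: a_def)
  ultimately have "a \<in> sigma (s * n) k"
    using b unfolding sigma_def by (blast intro: finite_subset)
  moreover have "t = (a, (\<lambda>i. 0)) [^]\<^bsub>wr (s * n) k\<^esub> n"
    using dvd b by (simp add: t a_def wr_pow_torsion sigma_mod fun_eq_iff del: of_nat_mult)
  ultimately show ?thesis
    using that by blast
qed

lemma fully_invariant_kernel_Red:
  assumes "s > 0" and "n > 0"
  shows "fully_invariant (wr (s * n) k) (kernel (wr (s * n) k) (wr n k) (Red n))"
  unfolding fully_invariant_def
proof (intro ballI image_subsetI)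
  fix \<chi> t assume \<chi>: "\<chi> \<in> hom (wr (s * n) k) (wr (s * n) k)"
    and t: "t \<in> kernel (wr (s * n) k) (wr n k) (Red n)"
  have group: "group (wr (s * n) k)"
    using assms by (simp add: wr_group)
  obtain a where a: "a \<in> sigma (s * n) k" and t_eq: "t = (a, (\<lambda>i. 0)) [^]\<^bsub>wr (s * n) k\<^esub> n"
    using kernel_Red_nth_powerE[OF assms(2) t] by blast
  have a_carrier: "(a, (\<lambda>i. 0)) \<in> carrier (wr (s * n) k)"
    using a by (simp add: wr_carrier zk_zero)
  obtain b where "\<chi> (a, (\<lambda>i. 0)) = (b, (\<lambda>i. 0))"
    using wr_endomorphism_preserves_torsion[OF _ \<chi> a] assms by (metis mult_pos_pos prod.collapse)
  then have "Red n (\<chi> t) = \<one>\<^bsub>wr n k\<^esub>"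
    using hom_nat_pow[OF \<chi> a_carrier group group] by (simp add: t_eq Red_nth_power_torsion)
  moreover have "\<chi> t \<in> carrier (wr (s * n) k)"
    using \<chi> t by (simp add: kernel_def hom_in_carrier)
  ultimately show "\<chi> t \<in> kernel (wr (s * n) k) (wr n k) (Red n)"
    by (simp add: kernel_def)
qed

theorem theorem3p2:
  fixes s n k :: nat
    and \<phi> :: "((nat \<Rightarrow> int) \<Rightarrow> int) \<times> (nat \<Rightarrow> int) \<Rightarrow> ((nat \<Rightarrow> int) \<Rightarrow> int) \<times> (nat \<Rightarrow> int)"
  assumes "s > 0" and "n > 0" and "k > 0"
    and "\<phi> \<in> iso (wr (s * n) k) (wr (s * n) k)"
  shows "\<exists>\<psi> \<in> iso (wr n k) (wr n k).
           (\<forall>g \<in> carrier (wr (s * n) k). Red n (\<phi> g) = \<psi> (Red n g))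
         \<and> (\<forall>\<sigma> \<in> sigma (s * n) k. red n (tors \<phi> \<sigma>) = tors \<psi> (red n \<sigma>))
         \<and> (\<forall>z \<in> zk k. bar \<phi> z = bar \<psi> z)
         \<and> reidemeister (wr (s * n) k) \<phi> \<ge> reidemeister (wr n k) \<psi>"
proof -
  interpret Red: group_hom "wr (s * n) k" "wr n k" "Red n"
    using Red_group_hom[OF assms(1,2)] .
  have "\<phi> ` kernel (wr (s * n) k) (wr n k) (Red n) = kernel (wr (s * n) k) (wr n k) (Red n)"
    using Red.G.fully_invariant_iso_image[OF fully_invariant_kernel_Red[OF assms(1,2)] _ assms(4)]
    by (auto simp: kernel_def)
  then obtain \<psi> where \<psi>: "\<psi> \<in> iso (wr n k) (wr n k)"
    and commute: "\<And>g. g \<in> carrier (wr (s * n) k) \<Longrightarrow> Red n (\<phi> g) = \<psi> (Red n g)"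
    using Red.induced_iso[OF Red_surj[OF assms(1,2)] assms(4)] by blast
  have "red n (tors \<phi> \<sigma>) = tors \<psi> (red n \<sigma>)" if "\<sigma> \<in> sigma (s * n) k" for \<sigma>
    using commute[of "(\<sigma>, \<lambda>i. 0)"] that by (simp add: tors_def Red_def wr_carrier zk_zero prod_eq_iff)
  moreover have "bar \<phi> z = bar \<psi> z" if "z \<in> zk k" for z
    using commute[of "(\<lambda>x. 0, z)"] that assms(1,2)
    by (simp add: bar_def Red_def red_def wr_carrier sigma_def prod_eq_iff)
  moreover have "reidemeister (wr n k) \<psi> \<le> reidemeister (wr (s * n) k) \<phi>"
    using Red.group_hom_axioms Red_surj[OF assms(1,2)] assms(4) \<psi> commute
    by (simp add: reidemeister_le_of_surjective_hom iso_imp_homomorphism)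
  ultimately show ?thesis
    using \<psi> commute by blast
qed

end
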